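(* Let $k\ge2$ be a constant. For TSP (on an undirected graph) or ATSP (on a directed graph) with $m$ edges, whose edge weights $w_e$ are drawn independently from distributions with densities $f_e:[0,1]\to[0,\phi]$, the expected maximum number of iterations of local search under the $k$-Opt neighbourhood (over all initial tours and all sequences of improving moves) is $O(4^{k^2}m^{k+2}\phi)$, where the hidden constant is absolute.
   Context: TSP/$k$-Opt: given a weighted undirected graph, a tour is a Hamiltonian cycle, its cost is the sum of its edge weights; the $k$-Opt neighbours of a tour are all tours obtained by removing some $r\in\{2,\dots,k\}$ edges of it and adding $r$ other edges of the graph. A solution is a tour with no neighbour of strictly smaller cost; local search repeatedly moves to a strictly cheaper neighbour. ATSP/$k$-Opt is the analogue on a weighted directed graph, with directed Hamiltonian cycles as tours and neighbours obtained by replacing at most $k$ arcs. An initial tour is assumed to be given. *)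

theory Defs
  imports "HOL-Analysis.Analysis"
begin

text \<open>Tours are represented by their edge sets. Vertices are natural numbers.\<close>

definition tsp_tours :: "nat set \<Rightarrow> nat set set \<Rightarrow> nat set set set" where
  "tsp_tours V E = {T. T \<subseteq> E \<and> (\<exists>vs. distinct vs \<and> set vs = V \<and> length vs \<ge> 3 \<and>
      T = {{vs ! i, vs ! (Suc i mod length vs)} | i. i < length vs})}"

definition atsp_tours :: "nat set \<Rightarrow> (nat \<times> nat) set \<Rightarrow> (nat \<times> nat) set set" where
  "atsp_tours V A = {T. T \<subseteq> A \<and> (\<exists>vs. distinct vs \<and> set vs = V \<and> length vs \<ge> 2 \<and>
      T = {(vs ! i, vs ! (Suc i mod length vs)) | i. i < length vs})}"

definition tour_cost :: "('e \<Rightarrow> real) \<Rightarrow> 'e set \<Rightarrow> real" where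
  "tour_cost w T = (\<Sum>e\<in>T. w e)"

definition kopt_neighbour :: "'e set set \<Rightarrow> nat \<Rightarrow> 'e set \<Rightarrow> 'e set \<Rightarrow> bool" where
  "kopt_neighbour tours k T T' \<longleftrightarrow> T \<in> tours \<and> T' \<in> tours \<and>
     (\<exists>r\<in>{2..k}. card (T - T') = r \<and> card (T' - T) = r)"

definition improving_seq :: "'e set set \<Rightarrow> nat \<Rightarrow> ('e \<Rightarrow> real) \<Rightarrow> 'e set list \<Rightarrow> bool" where
  "improving_seq tours k w ts \<longleftrightarrow> ts \<noteq> [] \<and> (\<forall>T\<in>set ts. T \<in> tours) \<and>
     (\<forall>i. Suc i < length ts \<longrightarrow> kopt_neighbour tours k (ts ! i) (ts ! Suc i) \<and>
                              tour_cost w (ts ! Suc i) < tour_cost w (ts ! i))"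

definition max_iterations :: "'e set set \<Rightarrow> nat \<Rightarrow> ('e \<Rightarrow> real) \<Rightarrow> ennreal" where
  "max_iterations tours k w = (SUP ts \<in> {ts. improving_seq tours k w ts}. of_nat (length ts - 1))"

definition bounded_density :: "real \<Rightarrow> (real \<Rightarrow> real) \<Rightarrow> bool" where
  "bounded_density \<phi> f \<longleftrightarrow> f \<in> borel_measurable lborel \<and>
     (\<forall>x. 0 \<le> f x \<and> f x \<le> \<phi>) \<and> (\<forall>x. x \<notin> {0..1} \<longrightarrow> f x = 0) \<and>
     (\<integral>\<^sup>+ x. ennreal (f x) \<partial>lborel) = 1"

definition weight_measure :: "'e set \<Rightarrow> ('e \<Rightarrow> real \<Rightarrow> real) \<Rightarrow> ('e \<Rightarrow> real) measure" where
  "weight_measure E f = (\<Pi>\<^sub>M e\<in>E. density lborel (\<lambda>x. ennreal (f e x)))"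

end

theory Submission
  imports Defs "HOL-Probability.Probability"
begin

text \<open>
  A k-Opt step from T to T' exchanges the removed edges X = T - T' (nonempty, at most k of
  them) for the added edges Y = T' - T, and every added edge only uses endpoints of removed
  edges, so Y ranges over the subsets of a set of at most B candidate edges determined by X.
  Since X and Y are disjoint, the gain w(X) - w(Y) has coefficient 1 at some weight, so it
  falls into an interval of length \<open>\<epsilon>\<close> with probability at most \<open>\<phi> \<epsilon>\<close>.
  All tours cost between 0 and m, so a run of L improving steps contains, for every t \<le> L,
  a step of gain at most m/t. Hence L is bounded by the number of t \<le> 2^m for which some
  move has gain in (0, m/t]; a union bound over the at most k m^k 2^B moves and the
  estimate harm (2^m) \<le> m + 1 give the expected value O(k 2^B m^(k+2) \<phi>).
  For TSP, B = (2k choose 2); for ATSP, B = k^2.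
\<close>

section \<open>Bounded densities and random weights\<close>

lemma bounded_density_nonneg: "bounded_density \<phi> g \<Longrightarrow> 0 \<le> \<phi>"
  unfolding bounded_density_def by (meson order_trans)

lemma prob_space_bounded_density:
  assumes "bounded_density \<phi> g"
  shows "prob_space (density lborel (\<lambda>x. ennreal (g x)))"
proof (rule prob_spaceI)
  have "emeasure (density lborel (\<lambda>x. ennreal (g x))) UNIV = (\<integral>\<^sup>+ x. ennreal (g x) \<partial>lborel)"
    by (subst emeasure_density) (use assms in \<open>auto simp: bounded_density_def\<close>)
  then show "emeasure (density lborel (\<lambda>x. ennreal (g x))) (space (density lborel (\<lambda>x. ennreal (g x)))) = 1"
    using assms by (simp add: bounded_density_def)
qed

lemma emeasure_bounded_density_interval:
  assumes "bounded_density \<phi> g" "0 \<le> \<epsilon>"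
  shows "emeasure (density lborel (\<lambda>x. ennreal (g x))) {a<..a+\<epsilon>} \<le> ennreal (\<phi> * \<epsilon>)"
proof -
  have g: "g \<in> borel_measurable lborel" using assms by (simp add: bounded_density_def)
  have "emeasure (density lborel (\<lambda>x. ennreal (g x))) {a<..a+\<epsilon>}
      = (\<integral>\<^sup>+ y. ennreal (g y) * indicator {a<..a+\<epsilon>} y \<partial>lborel)"
    using g by (subst emeasure_density) auto
  also have "\<dots> \<le> (\<integral>\<^sup>+ y. ennreal \<phi> * indicator {a<..a+\<epsilon>} y \<partial>lborel)"
    using assms
    by (intro nn_integral_mono) (auto simp: bounded_density_def split: split_indicator intro: ennreal_leI)
  also have "\<dots> = ennreal (\<phi> * \<epsilon>)"
    using assms bounded_density_nonneg[OF assms(1)] by (simp add: nn_integral_cmult_indicator ennreal_mult)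
  finally show ?thesis .
qed

lemma AE_weight_measure_unit_interval:
  assumes "finite E" and dens: "\<forall>e\<in>E. bounded_density \<phi> (f e)"
  shows "AE w in weight_measure E f. \<forall>e\<in>E. 0 \<le> w e \<and> w e \<le> 1"
  unfolding weight_measure_def
proof (intro AE_finite_allI AE_PiM_component)
  fix e assume e: "e \<in> E"
  have f: "(\<lambda>x. ennreal (f e x)) \<in> borel_measurable lborel" and out: "\<forall>x. x \<notin> {0..1} \<longrightarrow> f e x = 0"
    using dens e by (auto simp: bounded_density_def)
  show "AE x in density lborel (\<lambda>x. ennreal (f e x)). 0 \<le> x \<and> x \<le> 1"
    unfolding AE_density[OF f] using out by (intro AE_I2) force
qed (use assms prob_space_bounded_density in auto)

lemma measurable_weight_coordinate:
  assumes "e \<in> E"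
  shows "(\<lambda>w. w e) \<in> borel_measurable (weight_measure E f)"
proof -
  have "(\<lambda>w. w e) \<in> measurable (weight_measure E f) (density lborel (\<lambda>x. ennreal (f e x)))"
    unfolding weight_measure_def using assms by measurable
  then show ?thesis by (simp cong: measurable_cong_sets)
qed

lemma measurable_weight_sum:
  assumes "Z \<subseteq> E"
  shows "(\<lambda>w. \<Sum>e\<in>Z. w e) \<in> borel_measurable (weight_measure E f)"
  using assms by (intro borel_measurable_sum measurable_weight_coordinate) auto

text \<open>By Fubini, integrate out w i first: for fixed other weights the event asks w i to lie
  in an interval of length \<open>\<epsilon>\<close>.\<close>
lemma emeasure_weight_plus_independent_interval:
  assumes E: "finite E" "i \<in> E" and dens: "\<forall>e\<in>E. bounded_density \<phi> (f e)"
    and h: "h \<in> borel_measurable (weight_measure E f)" "\<And>w y. h (w(i := y)) = h w"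
    and "0 \<le> \<epsilon>"
  shows "emeasure (weight_measure E f) {w \<in> space (weight_measure E f). 0 < w i + h w \<and> w i + h w \<le> \<epsilon>}
     \<le> ennreal (\<phi> * \<epsilon>)"
proof -
  define M where "M = (\<lambda>e. if e \<in> E then density lborel (\<lambda>x. ennreal (f e x)) else return lborel 0)"
  have WM: "weight_measure E f = PiM E M"
    unfolding weight_measure_def M_def by (rule PiM_cong) auto
  have prob: "prob_space (M e)" for e
    using dens by (auto simp: M_def prob_space_bounded_density prob_space_return)
  interpret product_prob_space M
    by (auto simp: product_prob_space_def product_sigma_finite_def product_prob_space_axioms_def
        prob prob_space_imp_sigma_finite)
  define I where "I = E - {i}"
  have EI: "E = insert i I" "i \<notin> I" "finite I" using E by (auto simp: I_def)
  define S where "S = {w \<in> space (PiM E M). 0 < w i + h w \<and> w i + h w \<le> \<epsilon>}"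
  have "(\<lambda>w. w i) \<in> borel_measurable (PiM E M)" "h \<in> borel_measurable (PiM E M)"
    using measurable_weight_coordinate[OF E(2), of f] h(1) unfolding WM .
  then have S: "S \<in> sets (PiM E M)"
    unfolding S_def by measurable
  have "emeasure (PiM E M) S = (\<integral>\<^sup>+ x. (\<integral>\<^sup>+ y. indicator S (x(i := y)) \<partial>M i) \<partial>PiM I M)"
    using EI S by (simp add: product_nn_integral_insert[symmetric])
  also have "\<dots> \<le> (\<integral>\<^sup>+ x. ennreal (\<phi> * \<epsilon>) \<partial>PiM I M)"
  proof (rule nn_integral_mono)
    fix x assume x: "x \<in> space (PiM I M)"
    have "x(i := y) \<in> space (PiM E M)" for y
      using x EI E by (auto simp: space_PiM M_def PiE_def Pi_def extensional_def)
    then have "indicator S (x(i := y)) = (indicator {- h x<..- h x + \<epsilon>} y :: ennreal)" for y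
      by (auto simp: S_def h(2) split: split_indicator)
    then have "(\<integral>\<^sup>+ y. indicator S (x(i := y)) \<partial>M i)
        = emeasure (density lborel (\<lambda>z. ennreal (f i z))) {- h x<..- h x + \<epsilon>}"
      using E by (simp add: M_def)
    also have "\<dots> \<le> ennreal (\<phi> * \<epsilon>)"
      using dens E assms(6) by (intro emeasure_bounded_density_interval) auto
    finally show "(\<integral>\<^sup>+ y. indicator S (x(i := y)) \<partial>M i) \<le> ennreal (\<phi> * \<epsilon>)" .
  qed
  also have "\<dots> = ennreal (\<phi> * \<epsilon>)"
    using prob_space.emeasure_space_1[OF prob_space_PiM[of I M, OF prob]] by simp
  finally show ?thesis using WM S_def by simp
qed

section \<open>Gains of moves\<close>

definition gain :: "'e set \<Rightarrow> 'e set \<Rightarrow> ('e \<Rightarrow> real) \<Rightarrow> real" where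
  "gain X Y w = (\<Sum>e\<in>X. w e) - (\<Sum>e\<in>Y. w e)"

lemma tour_cost_diff_eq_gain:
  assumes "finite T" "finite T'"
  shows "tour_cost w T - tour_cost w T' = gain (T - T') (T' - T) w"
proof -
  have "tour_cost w T = (\<Sum>e\<in>T \<inter> T'. w e) + (\<Sum>e\<in>T - T'. w e)"
    "tour_cost w T' = (\<Sum>e\<in>T' \<inter> T. w e) + (\<Sum>e\<in>T' - T. w e)"
    unfolding tour_cost_def using assms by (simp_all add: sum.Int_Diff)
  then show ?thesis unfolding gain_def by (simp add: Int_commute)
qed

lemma measurable_gain:
  assumes "X \<subseteq> E" "Y \<subseteq> E"
  shows "gain X Y \<in> borel_measurable (weight_measure E f)"
  unfolding gain_def[abs_def] using measurable_weight_sum[OF assms(1)] measurable_weight_sum[OF assms(2)]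
  by measurable

lemma emeasure_gain_interval:
  assumes E: "finite E" and dens: "\<forall>e\<in>E. bounded_density \<phi> (f e)"
    and XY: "X \<subseteq> E" "Y \<subseteq> E" "X \<noteq> {}" "X \<inter> Y = {}" and "0 \<le> \<epsilon>"
  shows "emeasure (weight_measure E f) {w \<in> space (weight_measure E f). 0 < gain X Y w \<and> gain X Y w \<le> \<epsilon>}
     \<le> ennreal (\<phi> * \<epsilon>)"
proof -
  obtain i where i: "i \<in> X" using XY by auto
  have fin: "finite X" "finite Y" using XY E finite_subset by blast+
  define h where "h = (\<lambda>w::'a \<Rightarrow> real. (\<Sum>e\<in>X - {i}. w e) - (\<Sum>e\<in>Y. w e))"
  have gain: "gain X Y w = w i + h w" for w
    unfolding gain_def h_def using fin i by (simp add: sum.remove)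
  have "X - {i} \<subseteq> E" "i \<in> E" "i \<notin> Y" using i XY by auto
  have "h \<in> borel_measurable (weight_measure E f)"
    unfolding h_def using measurable_weight_sum[OF \<open>X - {i} \<subseteq> E\<close>] measurable_weight_sum[OF XY(2)]
    by (rule borel_measurable_diff)
  moreover have "h (w(i := y)) = h w" for w y
    unfolding h_def using \<open>i \<notin> Y\<close> by (intro arg_cong2[where f = "(-)"] sum.cong) auto
  ultimately show ?thesis
    unfolding gain by (rule emeasure_weight_plus_independent_interval[OF E(1) \<open>i \<in> E\<close> dens _ _ assms(7)])
qed

definition small_gain :: "('e set \<times> 'e set) set \<Rightarrow> real \<Rightarrow> ('e \<Rightarrow> real) set" where
  "small_gain Moves \<epsilon> = {w. \<exists>(X, Y)\<in>Moves. 0 < gain X Y w \<and> gain X Y w \<le> \<epsilon>}"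

definition proper_moves :: "'e set \<Rightarrow> ('e set \<times> 'e set) set \<Rightarrow> bool" where
  "proper_moves E Moves \<longleftrightarrow> finite Moves \<and>
     (\<forall>(X, Y)\<in>Moves. X \<subseteq> E \<and> Y \<subseteq> E \<and> X \<noteq> {} \<and> X \<inter> Y = {})"

lemma sets_gain_interval:
  assumes "X \<subseteq> E" "Y \<subseteq> E"
  shows "{w \<in> space (weight_measure E f). 0 < gain X Y w \<and> gain X Y w \<le> \<epsilon>} \<in> sets (weight_measure E f)"
  using measurable_gain[OF assms, of f] by measurable

lemma small_gain_eq_Union:
  "small_gain Moves \<epsilon> \<inter> space M =
     (\<Union>(X, Y)\<in>Moves. {w \<in> space M. 0 < gain X Y w \<and> gain X Y w \<le> \<epsilon>})"
  unfolding small_gain_def by auto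

lemma sets_small_gain:
  assumes "proper_moves E Moves"
  shows "small_gain Moves \<epsilon> \<inter> space (weight_measure E f) \<in> sets (weight_measure E f)"
  unfolding small_gain_eq_Union
proof (rule sets.finite_UN)
  show "finite Moves" using assms by (simp add: proper_moves_def)
  fix m assume "m \<in> Moves"
  then show "(case m of (X, Y) \<Rightarrow> {w \<in> space (weight_measure E f). 0 < gain X Y w \<and> gain X Y w \<le> \<epsilon>})
      \<in> sets (weight_measure E f)"
    using assms unfolding proper_moves_def by (cases m) (auto intro: sets_gain_interval)
qed

lemma emeasure_small_gain:
  assumes "finite E" "\<forall>e\<in>E. bounded_density \<phi> (f e)" "proper_moves E Moves" "0 \<le> \<epsilon>"
  shows "emeasure (weight_measure E f) (small_gain Moves \<epsilon> \<inter> space (weight_measure E f))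
     \<le> of_nat (card Moves) * ennreal (\<phi> * \<epsilon>)"
proof -
  let ?P = "weight_measure E f"
  have moves: "finite Moves" "\<And>X Y. (X, Y) \<in> Moves \<Longrightarrow> X \<subseteq> E \<and> Y \<subseteq> E \<and> X \<noteq> {} \<and> X \<inter> Y = {}"
    using assms(3) by (auto simp: proper_moves_def)
  have "emeasure ?P (small_gain Moves \<epsilon> \<inter> space ?P)
      \<le> (\<Sum>(X, Y)\<in>Moves. emeasure ?P {w \<in> space ?P. 0 < gain X Y w \<and> gain X Y w \<le> \<epsilon>})"
    unfolding small_gain_eq_Union case_prod_beta using moves
    by (intro emeasure_subadditive_finite) (auto simp: sets_gain_interval)
  also have "\<dots> \<le> (\<Sum>(X, Y)\<in>Moves. ennreal (\<phi> * \<epsilon>))"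
  proof (intro sum_mono, clarify)
    fix X Y assume "(X, Y) \<in> Moves"
    then show "emeasure ?P {w \<in> space ?P. 0 < gain X Y w \<and> gain X Y w \<le> \<epsilon>} \<le> ennreal (\<phi> * \<epsilon>)"
      using moves(2) assms(1,2,4) by (intro emeasure_gain_interval) auto
  qed
  also have "\<dots> = of_nat (card Moves) * ennreal (\<phi> * \<epsilon>)"
    by (simp add: case_prod_beta)
  finally show ?thesis .
qed

section \<open>Runs of local search\<close>

lemma improving_seq_cost_less:
  assumes "improving_seq Tours k w ts" "i < j" "j < length ts"
  shows "tour_cost w (ts ! j) < tour_cost w (ts ! i)"
  using assms(2,3)
proof (induction j)
  case (Suc j)
  have "tour_cost w (ts ! Suc j) < tour_cost w (ts ! j)"
    using assms(1) Suc.prems unfolding improving_seq_def by blast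
  then show ?case
    using Suc by (cases "i = j") simp_all
qed simp

lemma improving_seq_length_le:
  assumes "improving_seq Tours k w ts" "Tours \<subseteq> Pow E" "finite E"
  shows "length ts \<le> 2 ^ card E"
proof -
  have "distinct ts"
    unfolding distinct_conv_nth
  proof (intro allI impI)
    fix i j assume "i < length ts" "j < length ts" "i \<noteq> j"
    then show "ts ! i \<noteq> ts ! j"
      using improving_seq_cost_less[OF assms(1), of i j] improving_seq_cost_less[OF assms(1), of j i]
      by (cases "i < j") auto
  qed
  then have "length ts = card (set ts)" by (simp add: distinct_card)
  also have "\<dots> \<le> card (Pow E)"
    using assms unfolding improving_seq_def by (intro card_mono) auto
  finally show ?thesis using assms(3) by (simp add: card_Pow)
qed

text \<open>The gains of the steps telescope to at most c, so they cannot all exceed c / t.\<close>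
lemma improving_seq_small_step:
  assumes seq: "improving_seq Tours k w ts"
    and cost: "\<forall>T\<in>Tours. 0 \<le> tour_cost w T \<and> tour_cost w T \<le> c"
    and t: "1 \<le> t" "t \<le> length ts - 1"
  shows "\<exists>i. Suc i < length ts \<and> tour_cost w (ts ! i) - tour_cost w (ts ! Suc i) \<le> c / real t"
proof (rule ccontr)
  define L where "L = length ts - 1"
  assume "\<not> ?thesis"
  then have big: "c / real t < tour_cost w (ts ! i) - tour_cost w (ts ! Suc i)" if "i < L" for i
    using that by (auto simp: L_def not_le)
  have L: "1 \<le> L" "real t \<le> real L" using t by (auto simp: L_def)
  have ends: "ts ! 0 \<in> Tours" "ts ! L \<in> Tours"
    using seq L unfolding improving_seq_def L_def by (auto intro!: nth_mem)
  have "real L * (c / real t) = (\<Sum>i<L. c / real t)" by simp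
  also have "\<dots> < (\<Sum>i<L. tour_cost w (ts ! i) - tour_cost w (ts ! Suc i))"
    using L big by (intro sum_strict_mono) (auto simp: lessThan_empty_iff)
  also have "\<dots> = tour_cost w (ts ! 0) - tour_cost w (ts ! L)"
    by (rule sum_lessThan_telescope')
  also have "\<dots> \<le> c"
    using cost ends by (meson diff_le_eq add_increasing2)
  finally have "real L * (c / real t) < c" .
  moreover have "c \<le> real L * (c / real t)"
  proof -
    have "0 \<le> c" using cost ends(1) by (meson order_trans)
    with L(2) have "c * real t \<le> c * real L" by (rule mult_left_mono)
    then show ?thesis using t by (simp add: field_simps)
  qed
  ultimately show False by simp
qed

lemma tour_cost_unit_weights:
  assumes "finite E" "T \<subseteq> E" "\<forall>e\<in>E. 0 \<le> w e \<and> w e \<le> 1"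
  shows "0 \<le> tour_cost w T" "tour_cost w T \<le> real (card E)"
proof -
  show "0 \<le> tour_cost w T" unfolding tour_cost_def using assms by (intro sum_nonneg) auto
  have "tour_cost w T \<le> real (card T) * 1"
    unfolding tour_cost_def using assms by (intro sum_bounded_above) auto
  also have "\<dots> \<le> real (card E)" using assms by (simp add: card_mono)
  finally show "tour_cost w T \<le> real (card E)" .
qed

lemma max_iterations_le_sum_small_gain:
  assumes E: "finite E" and TE: "Tours \<subseteq> Pow E" and unit: "\<forall>e\<in>E. 0 \<le> w e \<and> w e \<le> 1"
    and moves: "\<And>T T'. kopt_neighbour Tours k T T' \<Longrightarrow> (T - T', T' - T) \<in> Moves"
  shows "max_iterations Tours k w
     \<le> (\<Sum>t\<in>{1..2 ^ card E}. indicator (small_gain Moves (real (card E) / real t)) w)"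
  unfolding max_iterations_def
proof (rule SUP_least, clarify)
  fix ts assume seq: "improving_seq Tours k w ts"
  let ?S = "\<lambda>t. small_gain Moves (real (card E) / real t)"
  have cost: "\<forall>T\<in>Tours. 0 \<le> tour_cost w T \<and> tour_cost w T \<le> real (card E)"
    using tour_cost_unit_weights[OF E _ unit] TE by blast
  have "w \<in> ?S t" if t: "t \<in> {1..length ts - 1}" for t
  proof -
    obtain i where i: "Suc i < length ts"
      and le: "tour_cost w (ts ! i) - tour_cost w (ts ! Suc i) \<le> real (card E) / real t"
      using improving_seq_small_step[OF seq cost, of t] t by auto
    have nb: "kopt_neighbour Tours k (ts ! i) (ts ! Suc i)"
      and lt: "tour_cost w (ts ! Suc i) < tour_cost w (ts ! i)"
      using seq i unfolding improving_seq_def by auto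
    then have "finite (ts ! i)" "finite (ts ! Suc i)"
      using TE E by (meson PowD finite_subset kopt_neighbour_def subsetD)+
    then have "gain (ts ! i - ts ! Suc i) (ts ! Suc i - ts ! i) w = tour_cost w (ts ! i) - tour_cost w (ts ! Suc i)"
      by (simp add: tour_cost_diff_eq_gain)
    then show ?thesis
      unfolding small_gain_def using moves[OF nb] lt le by (intro CollectI bexI) auto
  qed
  then have "of_nat (length ts - 1) = (\<Sum>t\<in>{1..length ts - 1}. indicator (?S t) w :: ennreal)"
    by simp
  also have "\<dots> \<le> (\<Sum>t\<in>{1..2 ^ card E}. indicator (?S t) w)"
    using improving_seq_length_le[OF seq TE E] by (intro sum_mono2) auto
  finally show "of_nat (length ts - 1) \<le> (\<Sum>t\<in>{1..2 ^ card E}. indicator (?S t) w :: ennreal)" .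
qed

lemma harm_two_pow_le: "harm (2 ^ m) \<le> (1 + real m :: real)"
proof (induction m)
  case (Suc m)
  have "harm (2 ^ Suc m) = harm (2 ^ m) + (\<Sum>t\<in>{2 ^ m + 1..2 ^ Suc m}. inverse (real t))"
    unfolding harm_def by (subst sum.union_disjoint[symmetric]) (auto intro!: sum.cong)
  also have "(\<Sum>t\<in>{2 ^ m + 1..2 ^ Suc m}. inverse (real t)) \<le> real (card {2 ^ m + 1..2 ^ Suc m :: nat}) * inverse (2 ^ m)"
    by (intro sum_bounded_above) (auto simp: field_simps)
  finally show ?case using Suc by simp
qed (simp add: harm_def)

lemma sum_ennreal_harmonic_le:
  "(\<Sum>t\<in>{1..2 ^ m}. ennreal (\<phi> * (real m / real t))) \<le> ennreal (2 * \<phi> * real m ^ 2)"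
proof (cases "0 \<le> \<phi>")
  case True
  have "(\<Sum>t\<in>{1..2 ^ m}. ennreal (\<phi> * (real m / real t))) = ennreal (\<Sum>t\<in>{1..2 ^ m}. \<phi> * (real m / real t))"
    using True by (intro sum_ennreal) auto
  also have "(\<Sum>t\<in>{1..2 ^ m}. \<phi> * (real m / real t)) = \<phi> * real m * harm (2 ^ m)"
    unfolding harm_def by (simp add: sum_distrib_left divide_inverse mult.assoc)
  also have "\<phi> * real m * harm (2 ^ m) \<le> \<phi> * real m * (1 + real m)"
    using True harm_two_pow_le by (intro mult_left_mono) auto
  also have "\<dots> \<le> \<phi> * (2 * real m ^ 2)"
  proof -
    have "real m \<le> real m ^ 2" by (metis le_square of_nat_le_iff of_nat_power power2_eq_square)
    then have "real m * (1 + real m) \<le> 2 * real m ^ 2" by (simp add: algebra_simps power2_eq_square)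
    then show ?thesis using mult_left_mono[OF _ True] by (simp add: mult.assoc)
  qed
  finally show ?thesis by (simp add: ennreal_leI mult.assoc mult.left_commute)
next
  case False
  then have "ennreal (\<phi> * (real m / real t)) = 0" for t
    by (simp add: ennreal_eq_0_iff mult_nonpos_nonneg divide_nonpos_nonneg)
  then show ?thesis by simp
qed

theorem nn_integral_max_iterations_le:
  assumes E: "finite E" and TE: "Tours \<subseteq> Pow E" and dens: "\<forall>e\<in>E. bounded_density \<phi> (f e)"
    and proper: "proper_moves E Moves"
    and moves: "\<And>T T'. kopt_neighbour Tours k T T' \<Longrightarrow> (T - T', T' - T) \<in> Moves"
  shows "(\<integral>\<^sup>+ w. max_iterations Tours k w \<partial>weight_measure E f)
     \<le> of_nat (card Moves) * ennreal (2 * \<phi> * real (card E) ^ 2)"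
proof -
  let ?P = "weight_measure E f" and ?m = "card E"
  let ?S = "\<lambda>t. small_gain Moves (real ?m / real t) \<inter> space ?P"
  have "AE w in ?P. max_iterations Tours k w \<le> (\<Sum>t\<in>{1..2 ^ ?m}. indicator (?S t) w)"
    using AE_weight_measure_unit_interval[OF E dens] AE_space
    by eventually_elim (use max_iterations_le_sum_small_gain[OF E TE _ moves] in \<open>simp add: indicator_inter_arith\<close>)
  then have "(\<integral>\<^sup>+ w. max_iterations Tours k w \<partial>?P) \<le> (\<integral>\<^sup>+ w. (\<Sum>t\<in>{1..2 ^ ?m}. indicator (?S t) w) \<partial>?P)"
    by (rule nn_integral_mono_AE)
  also have "\<dots> = (\<Sum>t\<in>{1..2 ^ ?m}. emeasure ?P (?S t))"
    using sets_small_gain[OF proper] by (subst nn_integral_sum) auto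
  also have "\<dots> \<le> (\<Sum>t\<in>{1..2 ^ ?m}. of_nat (card Moves) * ennreal (\<phi> * (real ?m / real t)))"
    by (intro sum_mono emeasure_small_gain[OF E dens proper]) simp
  also have "\<dots> \<le> of_nat (card Moves) * ennreal (2 * \<phi> * real ?m ^ 2)"
    unfolding sum_distrib_left[symmetric] by (intro mult_left_mono sum_ennreal_harmonic_le) auto
  finally show ?thesis .
qed

section \<open>Counting moves\<close>

definition local_moves :: "'e set \<Rightarrow> nat \<Rightarrow> ('e set \<Rightarrow> 'e set) \<Rightarrow> ('e set \<times> 'e set) set" where
  "local_moves E k addable = {(X, Y). X \<subseteq> E \<and> X \<noteq> {} \<and> card X \<le> k \<and> Y \<subseteq> addable X \<and> X \<inter> Y = {}}"

lemma card_nonempty_subsets_le: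
  assumes "finite E"
  shows "card {X. X \<subseteq> E \<and> X \<noteq> {} \<and> card X \<le> k} \<le> k * card E ^ k"
proof -
  have "{X. X \<subseteq> E \<and> X \<noteq> {} \<and> card X \<le> k} \<subseteq> (\<Union>r\<in>{1..k}. {X. X \<subseteq> E \<and> card X = r})"
    by (auto simp: Suc_le_eq card_gt_0_iff dest: rev_finite_subset[OF assms])
  then have "card {X. X \<subseteq> E \<and> X \<noteq> {} \<and> card X \<le> k} \<le> card (\<Union>r\<in>{1..k}. {X. X \<subseteq> E \<and> card X = r})"
    using assms by (intro card_mono) (auto intro: finite_subset[of _ "Pow E"])
  also have "\<dots> \<le> (\<Sum>r\<in>{1..k}. card {X. X \<subseteq> E \<and> card X = r})"
    by (rule card_UN_le) simp
  also have "\<dots> = (\<Sum>r\<in>{1..k}. card E choose r)" using assms by (simp add: n_subsets)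
  also have "\<dots> \<le> (\<Sum>r\<in>{1..k}. card E ^ k)"
  proof (rule sum_mono)
    fix r assume r: "r \<in> {1..k}"
    show "card E choose r \<le> card E ^ k"
    proof (cases "r \<le> card E")
      case True
      then have "card E choose r \<le> card E ^ r" by (rule binomial_le_pow)
      also have "\<dots> \<le> card E ^ k" using r True by (intro power_increasing) auto
      finally show ?thesis .
    qed (simp add: binomial_eq_0)
  qed
  finally show ?thesis by simp
qed

lemma local_moves_subset_Sigma:
  "local_moves E k addable \<subseteq> Sigma {X. X \<subseteq> E \<and> X \<noteq> {} \<and> card X \<le> k} (\<lambda>X. Pow (addable X))"
  unfolding local_moves_def by auto

lemma finite_local_moves:
  assumes "finite E" "\<And>X. X \<subseteq> E \<Longrightarrow> addable X \<subseteq> E"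
  shows "finite (local_moves E k addable)"
proof (rule finite_subset[OF local_moves_subset_Sigma], rule finite_SigmaI)
  show "finite {X. X \<subseteq> E \<and> X \<noteq> {} \<and> card X \<le> k}" using assms(1) by (auto intro: finite_subset[of _ "Pow E"])
  show "finite (Pow (addable X))" if "X \<in> {X. X \<subseteq> E \<and> X \<noteq> {} \<and> card X \<le> k}" for X
    using that finite_subset[OF assms(2) assms(1)] by simp
qed

lemma card_local_moves_le:
  assumes E: "finite E" and addable: "\<And>X. X \<subseteq> E \<Longrightarrow> addable X \<subseteq> E"
    and card_addable: "\<And>X. X \<subseteq> E \<Longrightarrow> card X \<le> k \<Longrightarrow> card (addable X) \<le> B"
  shows "card (local_moves E k addable) \<le> k * card E ^ k * 2 ^ B"
proof -
  define Xs where "Xs = {X. X \<subseteq> E \<and> X \<noteq> {} \<and> card X \<le> k}"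
  have Xs: "finite Xs" unfolding Xs_def using E by (auto intro: finite_subset[of _ "Pow E"])
  have addable_fin: "finite (addable X)" if "X \<in> Xs" for X
    using that finite_subset[OF addable E] unfolding Xs_def by blast
  have "card (local_moves E k addable) \<le> card (Sigma Xs (\<lambda>X. Pow (addable X)))"
  proof (rule card_mono)
    show "finite (Sigma Xs (\<lambda>X. Pow (addable X)))" using Xs addable_fin by simp
    show "local_moves E k addable \<subseteq> Sigma Xs (\<lambda>X. Pow (addable X))"
      unfolding Xs_def by (rule local_moves_subset_Sigma)
  qed
  also have "\<dots> = (\<Sum>X\<in>Xs. 2 ^ card (addable X))" using Xs addable_fin by (simp add: card_SigmaI card_Pow)
  also have "\<dots> \<le> (\<Sum>X\<in>Xs. 2 ^ B)"
  proof (rule sum_mono)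
    fix X assume "X \<in> Xs"
    then show "2 ^ card (addable X) \<le> (2::nat) ^ B"
      using card_addable[of X] by (intro power_increasing) (auto simp: Xs_def)
  qed
  also have "\<dots> \<le> k * card E ^ k * 2 ^ B" using card_nonempty_subsets_le[OF E, of k] by (simp add: Xs_def)
  finally show ?thesis .
qed

lemma proper_local_moves:
  assumes "finite E" "\<And>X. X \<subseteq> E \<Longrightarrow> addable X \<subseteq> E"
  shows "proper_moves E (local_moves E k addable)"
  unfolding proper_moves_def
proof
  show "finite (local_moves E k addable)" by (rule finite_local_moves[OF assms])
  show "\<forall>(X, Y)\<in>local_moves E k addable. X \<subseteq> E \<and> Y \<subseteq> E \<and> X \<noteq> {} \<and> X \<inter> Y = {}"
  proof (clarify)
    fix X Y assume "(X, Y) \<in> local_moves E k addable"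
    then show "X \<subseteq> E \<and> Y \<subseteq> E \<and> X \<noteq> {} \<and> X \<inter> Y = {}"
      using assms(2)[of X] unfolding local_moves_def by auto
  qed
qed

lemma kopt_neighbour_in_local_moves:
  assumes "Tours \<subseteq> Pow E" "kopt_neighbour Tours k T T'" "T' - T \<subseteq> addable (T - T')"
  shows "(T - T', T' - T) \<in> local_moves E k addable"
proof -
  obtain r where "2 \<le> r" "r \<le> k" "card (T - T') = r" "T \<in> Tours"
    using assms(2) unfolding kopt_neighbour_def by auto
  moreover from this have "T - T' \<noteq> {}" by (metis card.empty not_numeral_le_zero)
  ultimately show ?thesis
    using assms(1,3) unfolding local_moves_def by auto
qed

corollary nn_integral_max_iterations_le_local:
  assumes E: "finite E" and TE: "Tours \<subseteq> Pow E" and dens: "\<forall>e\<in>E. bounded_density \<phi> (f e)"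
    and addable: "\<And>X. X \<subseteq> E \<Longrightarrow> addable X \<subseteq> E"
    and card_addable: "\<And>X. X \<subseteq> E \<Longrightarrow> card X \<le> k \<Longrightarrow> card (addable X) \<le> B"
    and added: "\<And>T T'. kopt_neighbour Tours k T T' \<Longrightarrow> T' - T \<subseteq> addable (T - T')"
  shows "(\<integral>\<^sup>+ w. max_iterations Tours k w \<partial>weight_measure E f)
     \<le> of_nat (k * card E ^ k * 2 ^ B) * ennreal (2 * \<phi> * real (card E) ^ 2)"
proof -
  have "(\<integral>\<^sup>+ w. max_iterations Tours k w \<partial>weight_measure E f)
      \<le> of_nat (card (local_moves E k addable)) * ennreal (2 * \<phi> * real (card E) ^ 2)"
    using E TE dens proper_local_moves[OF E addable]
  proof (rule nn_integral_max_iterations_le)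
    show "(T - T', T' - T) \<in> local_moves E k addable" if "kopt_neighbour Tours k T T'" for T T'
      using that by (intro kopt_neighbour_in_local_moves[OF TE] added)
  qed
  also have "\<dots> \<le> of_nat (k * card E ^ k * 2 ^ B) * ennreal (2 * \<phi> * real (card E) ^ 2)"
    using card_local_moves_le[OF E addable card_addable] by (intro mult_right_mono of_nat_mono) simp_all
  finally show ?thesis .
qed

section \<open>Tours as cycles\<close>

lemma cyclic_predecessor:
  assumes "j < n"
  obtains p where "p < n" "\<And>i. i < n \<Longrightarrow> Suc i mod n = j \<longleftrightarrow> i = p"
proof
  show "(if j = 0 then n - 1 else j - 1) < n" using assms by auto
  show "Suc i mod n = j \<longleftrightarrow> i = (if j = 0 then n - 1 else j - 1)" if "i < n" for i
    using assms that by (auto simp: mod_Suc)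
qed

lemma Suc_mod_neq_self: "2 \<le> n \<Longrightarrow> i < n \<Longrightarrow> Suc i mod n \<noteq> i"
  by (auto simp: mod_Suc)

lemma Suc_Suc_mod_neq_self: "3 \<le> n \<Longrightarrow> i < n \<Longrightarrow> Suc (Suc i) mod n \<noteq> i"
  by (auto simp: mod_Suc)

lemma tsp_tour_incident_edges:
  assumes T: "T \<in> tsp_tours V E" and v: "v \<in> V"
  shows "\<exists>a b. a \<noteq> b \<and> {e \<in> T. v \<in> e} = {a, b}"
proof -
  obtain vs where vs: "distinct vs" "set vs = V" "3 \<le> length vs"
    and T_eq: "T = {{vs ! i, vs ! (Suc i mod length vs)} | i. i < length vs}"
    using T unfolding tsp_tours_def by blast
  define n where "n = length vs"
  define edge where "edge i = {vs ! i, vs ! (Suc i mod n)}" for i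
  have n: "3 \<le> n" using vs(3) by (simp add: n_def)
  have T_edges: "T = edge ` {..<n}" unfolding T_eq edge_def n_def by auto
  have nth_eq: "vs ! i = vs ! i' \<longleftrightarrow> i = i'" if "i < n" "i' < n" for i i'
    using vs(1) that by (simp add: n_def nth_eq_iff_index_eq)
  have Suc_mod_less: "Suc i mod n < n" for i using n by simp
  obtain j where j: "j < n" "vs ! j = v" using v vs(2) by (metis in_set_conv_nth n_def)
  obtain p where p: "p < n" "\<And>i. i < n \<Longrightarrow> Suc i mod n = j \<longleftrightarrow> i = p"
    using cyclic_predecessor[OF j(1)] by blast
  have incident: "v \<in> edge i \<longleftrightarrow> i = j \<or> i = p" if "i < n" for i
  proof -
    have "v = vs ! i \<longleftrightarrow> i = j" using nth_eq[OF that j(1)] j(2) by auto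
    moreover have "v = vs ! (Suc i mod n) \<longleftrightarrow> i = p"
      using nth_eq[OF Suc_mod_less[of i] j(1)] j(2) p(2)[OF that] by auto
    ultimately show ?thesis by (simp add: edge_def)
  qed
  have "edge j \<noteq> edge p"
  proof
    assume "edge j = edge p"
    moreover have "edge p = {vs ! p, v}" using p(2)[OF p(1)] j(2) by (simp add: edge_def)
    moreover have "vs ! (Suc j mod n) \<noteq> v"
      using nth_eq[OF Suc_mod_less j(1)] Suc_mod_neq_self[of n j] n j by simp
    ultimately have "vs ! (Suc j mod n) = vs ! p" by (auto simp: edge_def doubleton_eq_iff)
    then have "Suc (Suc p mod n) mod n = p" using nth_eq[OF Suc_mod_less p(1)] p(2)[OF p(1)] by simp
    then show False using Suc_Suc_mod_neq_self[OF n p(1)] by (simp add: mod_Suc_eq)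
  qed
  moreover have "{e \<in> T. v \<in> e} = {edge j, edge p}" using incident j p by (auto simp: T_edges)
  ultimately show ?thesis by blast
qed

lemma atsp_tour_unique_arcs:
  assumes T: "T \<in> atsp_tours V A" and u: "u \<in> V"
  shows "\<exists>!a. a \<in> T \<and> fst a = u" "\<exists>!a. a \<in> T \<and> snd a = u"
proof -
  obtain vs where vs: "distinct vs" "set vs = V" "2 \<le> length vs"
    and T_eq: "T = {(vs ! i, vs ! (Suc i mod length vs)) | i. i < length vs}"
    using T unfolding atsp_tours_def by blast
  define n where "n = length vs"
  define arc where "arc i = (vs ! i, vs ! (Suc i mod n))" for i
  have T_arcs: "T = arc ` {..<n}" unfolding T_eq arc_def n_def by auto
  have nth_eq: "vs ! i = vs ! i' \<longleftrightarrow> i = i'" if "i < n" "i' < n" for i i'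
    using vs(1) that by (simp add: n_def nth_eq_iff_index_eq)
  have Suc_mod_less: "Suc i mod n < n" for i using vs(3) unfolding n_def by (intro mod_less_divisor) linarith
  obtain j where j: "j < n" "vs ! j = u" using u vs(2) by (metis in_set_conv_nth n_def)
  obtain p where p: "p < n" "\<And>i. i < n \<Longrightarrow> Suc i mod n = j \<longleftrightarrow> i = p"
    using cyclic_predecessor[OF j(1)] by blast
  have "{a \<in> T. fst a = u} = {arc j}"
    using j nth_eq by (auto simp: T_arcs arc_def)
  then show "\<exists>!a. a \<in> T \<and> fst a = u" by (metis (mono_tags, lifting) mem_Collect_eq singletonD singletonI)
  have "snd (arc i) = u \<longleftrightarrow> i = p" if "i < n" for i
    using nth_eq[OF Suc_mod_less[of i] j(1)] j(2) p(2)[OF that] by (auto simp: arc_def)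
  then have "{i \<in> {..<n}. snd (arc i) = u} = {p}" using p(1) by auto
  moreover have "{a \<in> T. snd a = u} = arc ` {i \<in> {..<n}. snd (arc i) = u}" unfolding T_arcs by auto
  ultimately have "{a \<in> T. snd a = u} = {arc p}" by simp
  then show "\<exists>!a. a \<in> T \<and> snd a = u" by (metis (mono_tags, lifting) mem_Collect_eq singletonD singletonI)
qed

text \<open>An endpoint of an added edge that is not an endpoint of a removed edge would have
  degree at least three in the new tour.\<close>
lemma tsp_added_edges_subset:
  assumes nb: "kopt_neighbour (tsp_tours V E) k T T'" and EV: "\<forall>e\<in>E. e \<subseteq> V"
  shows "T' - T \<subseteq> {e \<in> E. e \<subseteq> \<Union>(T - T')}"
proof
  fix y assume y: "y \<in> T' - T"
  have TT: "T \<in> tsp_tours V E" "T' \<in> tsp_tours V E" using nb unfolding kopt_neighbour_def by auto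
  have yE: "y \<in> E" using y TT(2) unfolding tsp_tours_def by auto
  have "v \<in> \<Union>(T - T')" if v: "v \<in> y" for v
  proof (rule ccontr)
    assume v_kept: "v \<notin> \<Union>(T - T')"
    have "v \<in> V" using v yE EV by auto
    obtain a b where ab: "a \<noteq> b" "{e \<in> T. v \<in> e} = {a, b}"
      using tsp_tour_incident_edges[OF TT(1) \<open>v \<in> V\<close>] by blast
    obtain c d where cd: "{e \<in> T'. v \<in> e} = {c, d}"
      using tsp_tour_incident_edges[OF TT(2) \<open>v \<in> V\<close>] by blast
    have "a \<in> {e \<in> T. v \<in> e}" "b \<in> {e \<in> T. v \<in> e}" using ab(2) by auto
    then have "a \<in> {c, d}" "b \<in> {c, d}" unfolding cd[symmetric] using v_kept by auto
    then have "{e \<in> T'. v \<in> e} = {e \<in> T. v \<in> e}" unfolding cd ab(2) using ab(1) by auto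
    moreover have "y \<in> {e \<in> T'. v \<in> e}" using y v by simp
    ultimately show False using y by simp
  qed
  then show "y \<in> {e \<in> E. e \<subseteq> \<Union>(T - T')}" using yE by auto
qed

lemma atsp_added_arcs_subset:
  assumes nb: "kopt_neighbour (atsp_tours V A) k T T'" and AV: "\<forall>a\<in>A. fst a \<in> V \<and> snd a \<in> V"
  shows "T' - T \<subseteq> {a \<in> A. fst a \<in> fst ` (T - T') \<and> snd a \<in> snd ` (T - T')}"
proof
  fix y assume y: "y \<in> T' - T"
  have TT: "T \<in> atsp_tours V A" "T' \<in> atsp_tours V A" using nb unfolding kopt_neighbour_def by auto
  have yA: "y \<in> A" using y TT(2) unfolding atsp_tours_def by auto
  then have V: "fst y \<in> V" "snd y \<in> V" using AV by auto
  obtain x where x: "x \<in> T" "fst x = fst y" using atsp_tour_unique_arcs(1)[OF TT(1) V(1)] by blast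
  have "x \<notin> T'" using atsp_tour_unique_arcs(1)[OF TT(2) V(1)] x y by auto
  obtain z where z: "z \<in> T" "snd z = snd y" using atsp_tour_unique_arcs(2)[OF TT(1) V(2)] by blast
  have "z \<notin> T'" using atsp_tour_unique_arcs(2)[OF TT(2) V(2)] z y by auto
  have "fst y \<in> fst ` (T - T')" "snd y \<in> snd ` (T - T')"
    using x z \<open>x \<notin> T'\<close> \<open>z \<notin> T'\<close> by (metis Diff_iff image_eqI)+
  then show "y \<in> {a \<in> A. fst a \<in> fst ` (T - T') \<and> snd a \<in> snd ` (T - T')}"
    using yA by simp
qed

lemma card_edges_within_le:
  assumes "finite E" "\<forall>e\<in>E. card e = 2" "X \<subseteq> E" "card X \<le> k"
  shows "card {e \<in> E. e \<subseteq> \<Union>X} \<le> (2 * k) choose 2"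
proof -
  have fin: "finite (\<Union>X)" using assms by (metis card.infinite finite_Union rev_finite_subset subsetD zero_neq_numeral)
  have "card {e \<in> E. e \<subseteq> \<Union>X} \<le> card {e. e \<subseteq> \<Union>X \<and> card e = 2}"
    using assms(2) fin by (intro card_mono) (auto intro: finite_subset[of _ "Pow (\<Union>X)"])
  also have "\<dots> = card (\<Union>X) choose 2" using fin by (rule n_subsets)
  also have "\<dots> \<le> (2 * k) choose 2"
  proof (rule binomial_right_mono)
    have "card (\<Union>X) \<le> (\<Sum>e\<in>X. card e)" by (rule card_Union_le_sum_card)
    also have "\<dots> = 2 * card X" using assms(2,3) by (simp add: subset_iff)
    finally show "card (\<Union>X) \<le> 2 * k" using assms(4) by linarith
  qed
  finally show ?thesis .
qed

lemma card_arcs_within_le: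
  assumes "finite X" "card X \<le> k"
  shows "card {a \<in> A. fst a \<in> fst ` X \<and> snd a \<in> snd ` X} \<le> k * k"
proof -
  have "card {a \<in> A. fst a \<in> fst ` X \<and> snd a \<in> snd ` X} \<le> card (fst ` X \<times> snd ` X)"
    using assms(1) by (intro card_mono) (simp_all add: mem_Times_iff subset_iff)
  also have "\<dots> \<le> card X * card X"
    unfolding card_cartesian_product by (intro mult_le_mono card_image_le assms(1))
  also have "\<dots> \<le> k * k" using assms(2) by (intro mult_le_mono) auto
  finally show ?thesis .
qed

lemma k_times_2_pow_choose_le_4_pow: "1 \<le> k \<Longrightarrow> k * 2 ^ ((2 * k) choose 2) \<le> (4::nat) ^ k\<^sup>2"
proof -
  assume "1 \<le> k"
  have "(2 * k) choose 2 = k * (2 * k - 1)" by (simp add: choose_two)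
  then have exponent: "k + ((2 * k) choose 2) = 2 * k\<^sup>2"
    using \<open>1 \<le> k\<close> by (simp add: power2_eq_square algebra_simps)
  have "k * 2 ^ ((2 * k) choose 2) \<le> 2 ^ k * 2 ^ ((2 * k) choose 2)" by (simp add: less_exp less_imp_le)
  also have "\<dots> = 4 ^ k\<^sup>2" by (simp add: power_add[symmetric] exponent power_mult)
  finally show ?thesis .
qed

lemma k_times_2_pow_square_le_4_pow: "k * 2 ^ (k * k) \<le> (4::nat) ^ k\<^sup>2"
proof -
  have "k * 2 ^ (k * k) \<le> 2 ^ k * 2 ^ (k * k)" by (simp add: less_exp less_imp_le)
  also have "\<dots> \<le> 2 ^ (2 * k\<^sup>2)" by (simp add: power_add[symmetric] power2_eq_square)
  finally show ?thesis by (simp add: power_mult)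
qed

lemma ennreal_moves_bound_le:
  assumes "k * 2 ^ B \<le> (4::nat) ^ k\<^sup>2"
  shows "of_nat (k * m ^ k * 2 ^ B) * ennreal (2 * \<phi> * real m ^ 2)
    \<le> ennreal (2 * 4 ^ k\<^sup>2 * real m ^ (k + 2) * \<phi>)"
proof (cases "0 \<le> \<phi>")
  case True
  have "of_nat (k * m ^ k * 2 ^ B) * ennreal (2 * \<phi> * real m ^ 2)
      = ennreal (real (k * m ^ k * 2 ^ B) * (2 * \<phi> * real m ^ 2))"
    using True by (simp add: ennreal_of_nat_eq_real_of_nat ennreal_mult)
  also have "\<dots> \<le> ennreal (2 * 4 ^ k\<^sup>2 * real m ^ (k + 2) * \<phi>)"
  proof (rule ennreal_leI)
    have "real (k * 2 ^ B) \<le> real (4 ^ k\<^sup>2)" using assms by (simp only: of_nat_le_iff)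
    then have "real k * 2 ^ B \<le> 4 ^ k\<^sup>2" by simp
    have "real (k * m ^ k * 2 ^ B) * (2 * \<phi> * real m ^ 2) = (real k * 2 ^ B) * (2 * \<phi> * real m ^ (k + 2))"
      by (simp add: power_add power2_eq_square mult_ac)
    also have "\<dots> \<le> 4 ^ k\<^sup>2 * (2 * \<phi> * real m ^ (k + 2))"
      using \<open>real k * 2 ^ B \<le> 4 ^ k\<^sup>2\<close> True by (intro mult_right_mono) auto
    finally show "real (k * m ^ k * 2 ^ B) * (2 * \<phi> * real m ^ 2) \<le> 2 * 4 ^ k\<^sup>2 * real m ^ (k + 2) * \<phi>"
      by (simp add: mult_ac)
  qed
  finally show ?thesis .
next
  case False
  then have "ennreal (2 * \<phi> * real m ^ 2) = 0" by (simp add: ennreal_eq_0_iff mult_nonpos_nonneg)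
  then show ?thesis by simp
qed

theorem mainTheorem8:
  shows "\<exists>C::real. C > 0 \<and>
    (\<forall>(k::nat) (V::nat set) (E::nat set set) (\<phi>::real) (f::nat set \<Rightarrow> real \<Rightarrow> real).
       k \<ge> 2 \<longrightarrow> finite V \<longrightarrow> (\<forall>e\<in>E. e \<subseteq> V \<and> card e = 2) \<longrightarrow>
       (\<forall>e\<in>E. bounded_density \<phi> (f e)) \<longrightarrow>
       (\<integral>\<^sup>+ w. max_iterations (tsp_tours V E) k w \<partial>weight_measure E f)
         \<le> ennreal (C * 4 ^ (k\<^sup>2) * real (card E) ^ (k + 2) * \<phi>)) \<and>
    (\<forall>(k::nat) (V::nat set) (A::(nat \<times> nat) set) (\<phi>::real) (f::nat \<times> nat \<Rightarrow> real \<Rightarrow> real).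
       k \<ge> 2 \<longrightarrow> finite V \<longrightarrow> (\<forall>a\<in>A. fst a \<in> V \<and> snd a \<in> V \<and> fst a \<noteq> snd a) \<longrightarrow>
       (\<forall>a\<in>A. bounded_density \<phi> (f a)) \<longrightarrow>
       (\<integral>\<^sup>+ w. max_iterations (atsp_tours V A) k w \<partial>weight_measure A f)
         \<le> ennreal (C * 4 ^ (k\<^sup>2) * real (card A) ^ (k + 2) * \<phi>))"
proof (intro exI[of _ 2] conjI allI impI)
  fix k :: nat and V :: "nat set" and E :: "nat set set" and \<phi> :: real and f :: "nat set \<Rightarrow> real \<Rightarrow> real"
  assume "k \<ge> 2" "finite V" and EV: "\<forall>e\<in>E. e \<subseteq> V \<and> card e = 2" and "\<forall>e\<in>E. bounded_density \<phi> (f e)"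
  moreover have "finite E" using \<open>finite V\<close> EV by (meson Pow_iff finite_Pow_iff rev_finite_subset subsetI)
  ultimately have "(\<integral>\<^sup>+ w. max_iterations (tsp_tours V E) k w \<partial>weight_measure E f)
      \<le> of_nat (k * card E ^ k * 2 ^ ((2 * k) choose 2)) * ennreal (2 * \<phi> * real (card E) ^ 2)"
    by (intro nn_integral_max_iterations_le_local[where addable = "\<lambda>X. {e \<in> E. e \<subseteq> \<Union>X}"]
        card_edges_within_le tsp_added_edges_subset) (auto simp: tsp_tours_def)
  also have "\<dots> \<le> ennreal (2 * 4 ^ k\<^sup>2 * real (card E) ^ (k + 2) * \<phi>)"
    using \<open>k \<ge> 2\<close> by (intro ennreal_moves_bound_le k_times_2_pow_choose_le_4_pow) simp
  finally show "(\<integral>\<^sup>+ w. max_iterations (tsp_tours V E) k w \<partial>weight_measure E f)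
      \<le> ennreal (2 * 4 ^ k\<^sup>2 * real (card E) ^ (k + 2) * \<phi>)" .
next
  fix k :: nat and V :: "nat set" and A :: "(nat \<times> nat) set" and \<phi> :: real and f :: "nat \<times> nat \<Rightarrow> real \<Rightarrow> real"
  assume "k \<ge> 2" "finite V" and AV: "\<forall>a\<in>A. fst a \<in> V \<and> snd a \<in> V \<and> fst a \<noteq> snd a"
    and "\<forall>a\<in>A. bounded_density \<phi> (f a)"
  moreover have "finite A" using \<open>finite V\<close> AV by (intro finite_subset[of A "V \<times> V"]) (auto simp: mem_Times_iff)
  ultimately have "(\<integral>\<^sup>+ w. max_iterations (atsp_tours V A) k w \<partial>weight_measure A f)
      \<le> of_nat (k * card A ^ k * 2 ^ (k * k)) * ennreal (2 * \<phi> * real (card A) ^ 2)"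
    by (intro nn_integral_max_iterations_le_local[where addable = "\<lambda>X. {a \<in> A. fst a \<in> fst ` X \<and> snd a \<in> snd ` X}"]
        card_arcs_within_le atsp_added_arcs_subset) (auto simp: atsp_tours_def intro: finite_subset)
  also have "\<dots> \<le> ennreal (2 * 4 ^ k\<^sup>2 * real (card A) ^ (k + 2) * \<phi>)"
    by (intro ennreal_moves_bound_le k_times_2_pow_square_le_4_pow)
  finally show "(\<integral>\<^sup>+ w. max_iterations (atsp_tours V A) k w \<partial>weight_measure A f)
      \<le> ennreal (2 * 4 ^ k\<^sup>2 * real (card A) ^ (k + 2) * \<phi>)" .
qed simp

end
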